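(* For every string $T\in[1..\sigma]^{n-1}\#$, the number $z_T$ of factors in the LZ77 factorization of $T$ satisfies $z_T\le|\mathcal{E}^r_T|+|\mathcal{F}^r_T|$.
   Context: Let $\sigma\ge1$, $\#=0\notin[1..\sigma]$, and $T\in[1..\sigma]^{n-1}\#$ of length $n\ge2$. LZ77 factorization: let $A$ be a string containing each distinct character of $T$ exactly once, and consider $AT$ (so $T$ is virtually preceded by its alphabet). The factorization $T=T_1T_2\cdots T_z$ is built greedily: if $T_1\cdots T_i$ is a prefix of $T$ of length $k$, then $T_{i+1}$ is the longest prefix of $T[k+1..n]$ that has an occurrence in $AT$ starting at a position corresponding to some $j\le k$ in $T$-coordinates (positions of $A$ allowed; overlap with $T[k+1..]$ allowed); $z_T=z$. For a string $W$, $\mathcal{P}_T(W)$ is the set of starting positions of occurrences of $W$ in the circular version of $T$; $\Sigma^{\ell}_T(W)=\{a: \mathcal{P}_T(aW)\neq\emptyset\}$, $\Sigma^{r}_T(W)=\{b:\mathcal{P}_T(Wb)\ne\emptyset\}$. A repeat is a string $W$ (possibly empty) with $|\mathcal{P}_T(W)|>1$; right-maximal iff $|\Sigma^r_T(W)|>1$, left-maximal iff $|\Sigma^\ell_T(W)|>1$, maximal repeat iff both; $\mathcal{M}_T$ is the set of maximal repeats. $\mathsf{ST}_T$ is the suffix tree of $T$, $\ell(v)$ the label of node $v$. $\mathcal{E}^r_T$ is the set of edges $(v,w)$ of $\mathsf{ST}_T$ with $v=\mathrm{parent}(w)$ and both $\ell(v),\ell(w)\in\mathcal{M}_T$; $\mathcal{F}^r_T$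 is the set of such edges with $\ell(v)\in\mathcal{M}_T$ and $\ell(w)\notin\mathcal{M}_T$. *)

theory Defs
  imports Main "HOL-Library.Sublist"
begin

text \<open>Strings are lists of naturals; the terminator # is 0. Positions are 0-based.\<close>

definition occ :: "nat list \<Rightarrow> nat list \<Rightarrow> nat set" where
  "occ T W = {i. i < length T \<and> (\<forall>k < length W. W ! k = T ! ((i + k) mod length T))}"

definition left_ext :: "nat list \<Rightarrow> nat list \<Rightarrow> nat set" where
  "left_ext T W = {a. occ T (a # W) \<noteq> {}}"

definition right_ext :: "nat list \<Rightarrow> nat list \<Rightarrow> nat set" where
  "right_ext T W = {b. occ T (W @ [b]) \<noteq> {}}"

definition is_repeat :: "nat list \<Rightarrow> nat list \<Rightarrow> bool" where
  "is_repeat T W \<longleftrightarrow> card (occ T W) > 1"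

definition right_maximal :: "nat list \<Rightarrow> nat list \<Rightarrow> bool" where
  "right_maximal T W \<longleftrightarrow> is_repeat T W \<and> card (right_ext T W) > 1"

definition left_maximal :: "nat list \<Rightarrow> nat list \<Rightarrow> bool" where
  "left_maximal T W \<longleftrightarrow> is_repeat T W \<and> card (left_ext T W) > 1"

definition maximal_repeats :: "nat list \<Rightarrow> nat list set" where
  "maximal_repeats T = {W. right_maximal T W \<and> left_maximal T W}"

text \<open>Suffix tree of T, nodes identified with their labels: internal nodes (including the
  root, labelled by the empty string) are the right-maximal repeats, leaves are the suffixes.\<close>
definition st_internal :: "nat list \<Rightarrow> nat list set" where
  "st_internal T = {W. right_maximal T W}"

definition st_nodes :: "nat list \<Rightarrow> nat list set" where
  "st_nodes T = st_internal T \<union> {drop i T | i. i < length T}"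

definition st_edges :: "nat list \<Rightarrow> (nat list \<times> nat list) set" where
  "st_edges T = {(v, w). w \<in> st_nodes T \<and> v \<in> st_internal T \<and> strict_prefix v w \<and>
      (\<forall>u. strict_prefix v u \<and> strict_prefix u w \<longrightarrow> u \<notin> st_internal T)}"

definition E_r :: "nat list \<Rightarrow> (nat list \<times> nat list) set" where
  "E_r T = {(v, w) \<in> st_edges T. v \<in> maximal_repeats T \<and> w \<in> maximal_repeats T}"

definition F_r :: "nat list \<Rightarrow> (nat list \<times> nat list) set" where
  "F_r T = {(v, w) \<in> st_edges T. v \<in> maximal_repeats T \<and> w \<notin> maximal_repeats T}"

text \<open>LZ77 with T virtually preceded by A. Given that the factors so far cover T[0..k), the
  next factor has length lz_len A T k: the longest prefix of T[k..] having an occurrence in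
  A@T starting at a position (in A@T) strictly before position k of T (i.e. T-coordinate
  j <= k in 1-based terms); overlaps allowed.\<close>
definition lz_len :: "nat list \<Rightarrow> nat list \<Rightarrow> nat \<Rightarrow> nat" where
  "lz_len A T k = (GREATEST l. l \<le> length T - k \<and>
     (\<exists>p. p < length A + k \<and> p + l \<le> length (A @ T) \<and>
          take l (drop p (A @ T)) = take l (drop k T)))"

inductive_set lz_starts :: "nat list \<Rightarrow> nat list \<Rightarrow> nat set" for A T where
  start: "0 \<in> lz_starts A T"
| step: "k \<in> lz_starts A T \<Longrightarrow> k + lz_len A T k < length T \<Longrightarrow>
           k + lz_len A T k \<in> lz_starts A T"

definition lz_z :: "nat list \<Rightarrow> nat list \<Rightarrow> nat" where
  "lz_z A T = card (lz_starts A T)"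

end

theory Submission imports Defs begin

text \<open>Map the LZ77 factor starting at k to a pair (V, b): y is the longest prefix of the factor
  that is a right-maximal repeat, b the character following it, and V = x @ y is obtained by
  extending y to the left for as long as the left extension is forced, so that V is a maximal
  repeat and every occurrence of y is preceded by x. Since V @ [b] occurs in T, the pair
  determines an edge of the suffix tree leaving V, i.e. an edge of E_r or F_r.
  If factors k0 < k1 had the same pair, the occurrence of V @ [b] found from k0 yields an
  occurrence of y1 @ [b] ending where y0 ends. Starting before k1, it would be an earlier source
  of y1 @ [b], and the longest common extension with the factor at k1 would give a longer
  right-maximal prefix; starting at or after k1, y1 and hence V and y0 are empty, so k0 = k1.\<close>

lemma add_mod_cancel_right:
  fixes i j k n :: nat
  assumes "i < n" "j < n" "(i + k) mod n = (j + k) mod n"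
  shows "i = j"
proof -
  have "a = b" if a: "a < n" and ba: "b \<le> a" and eq: "(a + k) mod n = (b + k) mod n"
    for a b :: nat
  proof -
    obtain s where "a + k = b + k + n * s" using mod_eq_nat1E[OF eq] ba by auto
    with a show "a = b" by (cases s) auto
  qed
  from this[of i j] this[of j i] assms show ?thesis by linarith
qed

locale circular_string =
  fixes T :: "nat list" and n :: nat
  assumes length_T: "length T = n" and n_pos: "0 < n"
begin

lemma occ_iff: "i \<in> occ T W \<longleftrightarrow> i < n \<and> (\<forall>k < length W. W ! k = T ! ((i + k) mod n))"
  by (simp add: occ_def length_T)

lemma finite_occ: "finite (occ T W)"
  by (rule finite_subset[of _ "{..<n}"]) (auto simp: occ_iff)

lemma occ_appendD1: "i \<in> occ T (X @ Y) \<Longrightarrow> i \<in> occ T X"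
  unfolding occ_iff by (metis length_append nth_append trans_less_add1)

lemma occ_appendD2:
  assumes "i \<in> occ T (X @ Y)" shows "(i + length X) mod n \<in> occ T Y"
proof -
  have "Y ! k = T ! (((i + length X) mod n + k) mod n)" if "k < length Y" for k
  proof -
    have all: "\<forall>k' < length (X @ Y). (X @ Y) ! k' = T ! ((i + k') mod n)"
      using assms by (simp add: occ_iff)
    have "(X @ Y) ! (length X + k) = T ! ((i + (length X + k)) mod n)"
      using all[rule_format, of "length X + k"] that by simp
    then show ?thesis by (simp add: mod_add_left_eq add.assoc)
  qed
  then show ?thesis unfolding occ_iff using n_pos by simp
qed

lemma occ_append_overlap:
  assumes "i \<in> occ T (X @ Y)" "j \<in> occ T (Y @ Z)" "(i + length X) mod n = j"
  shows "i \<in> occ T (X @ Y @ Z)"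
proof -
  have XY: "\<forall>k < length (X @ Y). (X @ Y) ! k = T ! ((i + k) mod n)"
    and YZ: "\<forall>l < length (Y @ Z). (Y @ Z) ! l = T ! ((j + l) mod n)"
    using assms(1,2) by (simp_all add: occ_iff)
  have "(X @ Y @ Z) ! k = T ! ((i + k) mod n)" if k: "k < length (X @ Y @ Z)" for k
  proof (cases "k < length (X @ Y)")
    case True
    then show ?thesis using XY by (simp flip: append_assoc add: nth_append)
  next
    case False
    define l where "l = k - length X"
    have l: "k = length X + l" "l < length (Y @ Z)" using False k by (auto simp: l_def)
    have "(i + k) mod n = (j + l) mod n"
      using assms(3) l(1) by (metis add.assoc mod_add_left_eq)
    then show ?thesis using YZ l by (simp add: nth_append)
  qed
  then show ?thesis using assms(1) by (simp add: occ_iff)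
qed

lemma occ_Cons_predecessor:
  assumes "p \<in> occ T W" obtains q where "(q + 1) mod n = p" "q \<in> occ T (T ! q # W)"
proof
  define q where "q = (p + n - 1) mod n"
  have p: "p < n" using assms by (simp add: occ_iff)
  have q: "q < n" using n_pos by (simp add: q_def)
  have shift: "Suc (q + k) mod n = (p + k) mod n" for k
  proof -
    have "Suc (q + k) mod n = (p + n - 1 + Suc k) mod n"
      unfolding q_def by (metis add_Suc_right mod_add_left_eq)
    also have "p + n - 1 + Suc k = p + k + n" using n_pos by simp
    finally show ?thesis by simp
  qed
  show "(q + 1) mod n = p" using shift[of 0] p by simp
  show "q \<in> occ T (T ! q # W)"
    using assms q unfolding occ_iff by (auto simp: shift nth_Cons less_Suc_eq_0_disj)
qed

lemma right_ext_subset: "right_ext T W \<subseteq> set T"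
proof
  fix b assume "b \<in> right_ext T W"
  then obtain x where "x \<in> occ T (W @ [b])" by (auto simp: right_ext_def)
  then have "b = T ! ((x + length W) mod n)" by (auto simp: occ_iff nth_append)
  then show "b \<in> set T" using n_pos length_T by simp
qed

lemma left_ext_subset: "left_ext T W \<subseteq> set T"
proof
  fix a assume "a \<in> left_ext T W"
  then obtain x where "x \<in> occ T (a # W)" by (auto simp: left_ext_def)
  then have "a = T ! (x mod n)" by (auto simp: occ_iff)
  then show "a \<in> set T" using n_pos length_T by simp
qed

lemma finite_right_ext: "finite (right_ext T W)"
  using finite_subset[OF right_ext_subset] by blast

lemma finite_left_ext: "finite (left_ext T W)"
  using finite_subset[OF left_ext_subset] by blast

lemma repeat_occE:
  assumes "is_repeat T W" obtains i where "i \<in> occ T W"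
  using assms by (metis is_repeat_def card.empty ex_in_conv not_less0)

lemma right_maximalI:
  assumes "i \<in> occ T W" "j \<in> occ T W" "i \<noteq> j"
    and "T ! ((i + length W) mod n) \<noteq> T ! ((j + length W) mod n)"
  shows "right_maximal T W"
proof -
  have "x \<in> occ T (W @ [T ! ((x + length W) mod n)])" if "x \<in> occ T W" for x
    using that by (auto simp: occ_iff nth_append less_Suc_eq)
  then have "{T ! ((i + length W) mod n), T ! ((j + length W) mod n)} \<subseteq> right_ext T W"
    using assms(1,2) by (auto simp: right_ext_def)
  then have "card {T ! ((i + length W) mod n), T ! ((j + length W) mod n)} \<le> card (right_ext T W)"
    by (rule card_mono[OF finite_right_ext])
  then have "card (right_ext T W) \<ge> 2" using assms(4) by simp
  moreover have "card (occ T W) \<ge> 2"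
    using card_mono[OF finite_occ, of "{i, j}" W] assms(1-3) by simp
  ultimately show ?thesis by (simp add: right_maximal_def is_repeat_def)
qed

definition always_preceded :: "nat list \<Rightarrow> nat list \<Rightarrow> bool" where
  "always_preceded x y \<longleftrightarrow> occ T y \<subseteq> (\<lambda>i. (i + length x) mod n) ` occ T (x @ y)"

lemma always_preceded_Nil: "always_preceded [] y"
  unfolding always_preceded_def by (auto simp: occ_iff image_iff)

lemma always_preceded_trans:
  assumes "always_preceded x y" "always_preceded z (x @ y)"
  shows "always_preceded (z @ x) y"
  unfolding always_preceded_def
proof
  fix j assume "j \<in> occ T y"
  then obtain i where i: "i \<in> occ T (x @ y)" "j = (i + length x) mod n"
    using assms(1) by (auto simp: always_preceded_def)
  then obtain h where h: "h \<in> occ T (z @ x @ y)" "i = (h + length z) mod n"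
    using assms(2) by (auto simp: always_preceded_def)
  have "j = (h + length (z @ x)) mod n"
    using i(2) h(2) by (simp add: mod_add_left_eq add.assoc)
  then show "j \<in> (\<lambda>i. (i + length (z @ x)) mod n) ` occ T ((z @ x) @ y)"
    using h(1) by simp
qed

lemma card_occ_le_always_preceded:
  "always_preceded x y \<Longrightarrow> card (occ T y) \<le> card (occ T (x @ y))"
  unfolding always_preceded_def
  by (meson card_image_le card_mono finite_imageI finite_occ le_trans)

lemma always_preceded_occ_append:
  assumes "always_preceded x y" "j \<in> occ T (y @ z)"
  obtains i where "i \<in> occ T (x @ y @ z)" "(i + length x) mod n = j"
proof -
  obtain i where i: "i \<in> occ T (x @ y)" and shift: "(i + length x) mod n = j"
    using assms occ_appendD1 by (fastforce simp: always_preceded_def)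
  show ?thesis using that occ_append_overlap[OF i assms(2) shift] shift .
qed

lemma right_ext_subset_always_preceded:
  assumes "always_preceded x y" shows "right_ext T y \<subseteq> right_ext T (x @ y)"
proof
  fix b assume "b \<in> right_ext T y"
  then obtain j where "j \<in> occ T (y @ [b])" by (auto simp: right_ext_def)
  then obtain i where "i \<in> occ T (x @ y @ [b])" by (rule always_preceded_occ_append[OF assms])
  then show "b \<in> right_ext T (x @ y)" by (auto simp: right_ext_def)
qed

lemma right_maximal_always_preceded:
  assumes "right_maximal T y" "always_preceded x y"
  shows "right_maximal T (x @ y)"
proof -
  have "card (right_ext T y) \<le> card (right_ext T (x @ y))"
    using card_mono[OF finite_right_ext right_ext_subset_always_preceded[OF assms(2)]] .
  then show ?thesis
    using assms card_occ_le_always_preceded[OF assms(2)]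
    by (simp add: right_maximal_def is_repeat_def)
qed

lemma always_preceded_singleton_left_ext:
  assumes "left_ext T W = {a}" shows "always_preceded [a] W"
  unfolding always_preceded_def
proof
  fix j assume "j \<in> occ T W"
  then obtain q where q: "(q + 1) mod n = j" "q \<in> occ T (T ! q # W)"
    by (rule occ_Cons_predecessor)
  then have "T ! q = a" using assms by (auto simp: left_ext_def)
  with q show "j \<in> (\<lambda>i. (i + length [a]) mod n) ` occ T ([a] @ W)" by force
qed

lemma left_ext_singleton:
  assumes "is_repeat T W" "\<not> left_maximal T W" obtains a where "left_ext T W = {a}"
proof -
  obtain j where "j \<in> occ T W" using assms(1) by (rule repeat_occE)
  then obtain q where "q \<in> occ T (T ! q # W)" by (rule occ_Cons_predecessor)
  then have "left_ext T W \<noteq> {}" by (auto simp: left_ext_def)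
  moreover have "finite (left_ext T W)" by (rule finite_left_ext)
  moreover have "card (left_ext T W) \<le> 1" using assms by (simp add: left_maximal_def)
  ultimately show ?thesis using that by (metis card_0_eq card_1_singletonE le_neq_implies_less less_one)
qed

end

locale terminated_string = circular_string +
  assumes two_le_n: "2 \<le> n" and last_T: "T ! (n - 1) = 0"
    and T_nonzero: "\<And>i. i < n - 1 \<Longrightarrow> T ! i \<noteq> 0"
begin

lemma repeat_terminator_free:
  assumes "is_repeat T W" shows "0 \<notin> set W"
proof
  assume "0 \<in> set W"
  then obtain k where k: "k < length W" "W ! k = 0" by (auto simp: in_set_conv_nth)
  have "(i + k) mod n = n - 1" if "i \<in> occ T W" for i
  proof -
    have "T ! ((i + k) mod n) = 0" using that k by (auto simp: occ_iff)
    moreover have "(i + k) mod n < n" using n_pos by simp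
    ultimately show ?thesis using T_nonzero[of "(i + k) mod n"] by linarith
  qed
  then have "i = j" if "i \<in> occ T W" "j \<in> occ T W" for i j
    using that add_mod_cancel_right[of i n j k] by (simp add: occ_iff)
  then have "card (occ T W) \<le> 1" by (simp add: card_le_Suc0_iff_eq finite_occ)
  with assms show False by (simp add: is_repeat_def)
qed

lemma occ_terminator_free_bound:
  assumes "0 \<notin> set W" "i \<in> occ T W" shows "i + length W < n"
proof (rule ccontr)
  assume "\<not> i + length W < n"
  moreover have i: "i < n" using assms(2) by (simp add: occ_iff)
  ultimately have k: "n - 1 - i < length W" by linarith
  then have "W ! (n - 1 - i) = T ! ((i + (n - 1 - i)) mod n)" using assms(2) by (simp add: occ_iff)
  also have "(i + (n - 1 - i)) mod n = n - 1" using i by simp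
  finally show False using last_T assms(1) k by (metis nth_mem)
qed

lemma occ_linear_iff:
  assumes "i < n" "i + length W \<le> n"
  shows "i \<in> occ T W \<longleftrightarrow> take (length W) (drop i T) = W"
proof -
  have "(\<forall>k < length W. W ! k = T ! ((i + k) mod n)) \<longleftrightarrow> take (length W) (drop i T) = W"
    using assms length_T by (auto simp: list_eq_iff_nth_eq)
  then show ?thesis using assms(1) by (simp add: occ_iff)
qed

lemma maximal_repeat_Nil: "[] \<in> maximal_repeats T"
proof -
  have "0 \<in> occ T []" "n - 1 \<in> occ T []" using n_pos by (auto simp: occ_iff)
  moreover have "0 \<noteq> n - 1" "T ! 0 \<noteq> T ! (n - 1)" using two_le_n T_nonzero[of 0] last_T by auto
  ultimately have rm: "right_maximal T []" using right_maximalI[of 0 "[]" "n - 1"] by simp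
  have "0 \<in> occ T [T ! 0]" "n - 1 \<in> occ T [T ! (n - 1)]" using n_pos by (auto simp: occ_iff)
  then have "{T ! 0, T ! (n - 1)} \<subseteq> left_ext T []" by (auto simp: left_ext_def)
  then have "card {T ! 0, T ! (n - 1)} \<le> card (left_ext T [])"
    by (rule card_mono[OF finite_left_ext])
  then have "left_maximal T []"
    using rm \<open>T ! 0 \<noteq> T ! (n - 1)\<close> by (simp add: left_maximal_def right_maximal_def)
  with rm show ?thesis by (simp add: maximal_repeats_def)
qed

text \<open>While x @ y is not left-maximal its left extension is unique, hence forced; the
  extension terminates because the repeat x @ y avoids the terminator and so is shorter than T.\<close>

lemma maximal_repeat_left_closure_from:
  assumes "right_maximal T y" "always_preceded x y"
  shows "\<exists>x'. x' @ y \<in> maximal_repeats T \<and> always_preceded x' y"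
  using assms(2)
proof (induction "n - length x" arbitrary: x rule: less_induct)
  case less
  have rm: "right_maximal T (x @ y)" using right_maximal_always_preceded[OF assms(1) less.prems] .
  show ?case
  proof (cases "left_maximal T (x @ y)")
    case True
    then show ?thesis using rm less.prems by (auto simp: maximal_repeats_def)
  next
    case False
    then obtain a where "left_ext T (x @ y) = {a}"
      using rm by (auto simp: right_maximal_def elim: left_ext_singleton)
    then have pre: "always_preceded ([a] @ x) y"
      using always_preceded_trans[OF less.prems] always_preceded_singleton_left_ext by blast
    obtain i where "i \<in> occ T (x @ y)"
      using rm by (auto simp: right_maximal_def elim: repeat_occE)
    then have "length x < n"
      using occ_terminator_free_bound repeat_terminator_free rm
      by (fastforce simp: right_maximal_def)
    then show ?thesis using less.hyps[of "a # x"] pre by simp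
  qed
qed

lemma maximal_repeat_left_closure:
  assumes "right_maximal T y"
  obtains x where "x @ y \<in> maximal_repeats T" "always_preceded x y" "y = [] \<Longrightarrow> x = []"
proof (cases "y = []")
  case True
  then show ?thesis using that maximal_repeat_Nil always_preceded_Nil by simp
next
  case False
  then show ?thesis
    using that maximal_repeat_left_closure_from[OF assms always_preceded_Nil] by blast
qed

lemma right_maximal_eq_take_drop:
  assumes "right_maximal T W"
  obtains i where "i < n" "i + length W < n" "W = take (length W) (drop i T)"
proof -
  have repeat: "is_repeat T W" using assms by (simp add: right_maximal_def)
  then obtain i where i: "i \<in> occ T W" by (rule repeat_occE)
  have "i + length W < n" using occ_terminator_free_bound[OF repeat_terminator_free[OF repeat] i] .
  moreover have "i < n" using i by (simp add: occ_iff)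
  ultimately show ?thesis using that i occ_linear_iff by simp
qed

lemma finite_st_nodes: "finite (st_nodes T)"
proof (rule finite_subset)
  show "st_nodes T \<subseteq> (\<lambda>(i, l). take l (drop i T)) ` ({..<n} \<times> {..n})"
  proof
    fix W assume "W \<in> st_nodes T"
    then consider "right_maximal T W" | i where "i < n" "W = drop i T"
      using length_T by (auto simp: st_nodes_def st_internal_def)
    then show "W \<in> (\<lambda>(i, l). take l (drop i T)) ` ({..<n} \<times> {..n})"
    proof cases
      case 1
      then obtain i where "i < n" "i + length W < n" "W = take (length W) (drop i T)"
        by (rule right_maximal_eq_take_drop)
      then show ?thesis by force
    next
      case (2 i)
      then have "W = take n (drop i T)" using length_T by simp
      with 2 show ?thesis by force
    qed
  qed
qed simp

lemma finite_st_edges: "finite (st_edges T)"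
proof (rule finite_subset)
  show "st_edges T \<subseteq> st_nodes T \<times> st_nodes T"
    by (auto simp: st_edges_def st_nodes_def st_internal_def)
  show "finite (st_nodes T \<times> st_nodes T)" using finite_st_nodes by simp
qed

lemma card_E_r_F_r:
  "card (E_r T) + card (F_r T) = card {(v, w) \<in> st_edges T. v \<in> maximal_repeats T}"
proof -
  have "{(v, w) \<in> st_edges T. v \<in> maximal_repeats T} = E_r T \<union> F_r T"
    by (auto simp: E_r_def F_r_def)
  moreover have "finite (E_r T)" "finite (F_r T)"
    by (auto intro: finite_subset[OF _ finite_st_edges] simp: E_r_def F_r_def)
  moreover have "E_r T \<inter> F_r T = {}" by (auto simp: E_r_def F_r_def)
  ultimately show ?thesis by (simp add: card_Un_disjoint)
qed

text \<open>The child of V reached by the character b is the shortest node having V @ [b] as a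
  prefix; a suffix of T starting at an occurrence of V @ [b] shows that such nodes exist.\<close>

lemma st_edge_right_ext:
  assumes "right_maximal T V" "b \<in> right_ext T V"
  obtains w where "(V, w) \<in> st_edges T" "prefix (V @ [b]) w"
proof -
  obtain s where s: "s \<in> occ T (V @ [b])" using assms(2) by (auto simp: right_ext_def)
  have "s + length V < n"
    using occ_terminator_free_bound[OF _ occ_appendD1[OF s]] repeat_terminator_free assms(1)
    by (simp add: right_maximal_def)
  moreover have "s < n" using s by (simp add: occ_iff)
  ultimately have "take (length (V @ [b])) (drop s T) = V @ [b]"
    using occ_linear_iff[of s "V @ [b]"] s by simp
  then have "prefix (V @ [b]) (drop s T)" by (metis take_is_prefix)
  moreover have "drop s T \<in> st_nodes T" using \<open>s < n\<close> length_T by (auto simp: st_nodes_def)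
  ultimately obtain w where w: "w \<in> st_nodes T" "prefix (V @ [b]) w"
    and shortest: "\<And>u. u \<in> st_nodes T \<Longrightarrow> prefix (V @ [b]) u \<Longrightarrow> length w \<le> length u"
    using ex_has_least_nat[of "\<lambda>w. w \<in> st_nodes T \<and> prefix (V @ [b]) w" _ length]
    by blast
  have "u \<notin> st_internal T" if u: "strict_prefix V u" "strict_prefix u w" for u
  proof
    assume "u \<in> st_internal T"
    moreover have "length (V @ [b]) \<le> length u" using prefix_length_less[OF u(1)] by simp
    then have "prefix (V @ [b]) u"
      using prefix_length_prefix[OF w(2)] u(2) by (simp add: strict_prefix_def)
    ultimately have "length w \<le> length u" using shortest by (simp add: st_nodes_def)
    with prefix_length_less[OF u(2)] show False by simp
  qed
  moreover have "strict_prefix V (V @ [b])" by (simp add: strict_prefix_def)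
  then have "strict_prefix V w" using w(2) by (rule prefix_order.less_le_trans)
  ultimately have "(V, w) \<in> st_edges T"
    using w(1) assms(1) by (simp add: st_edges_def st_internal_def)
  then show ?thesis using w(2) by (rule that)
qed

lemma finite_maximal_repeat_extensions: "finite (SIGMA V:maximal_repeats T. right_ext T V)"
proof (rule finite_SigmaI)
  show "finite (maximal_repeats T)"
    by (rule finite_subset[OF _ finite_st_nodes]) (auto simp: maximal_repeats_def st_nodes_def st_internal_def)
  show "finite (right_ext T V)" for V by (rule finite_right_ext)
qed

lemma card_maximal_repeat_extensions_le:
  "card (SIGMA V:maximal_repeats T. right_ext T V) \<le> card (E_r T) + card (F_r T)"
proof -
  let ?G = "{(v, w) \<in> st_edges T. v \<in> maximal_repeats T}"
  have "(SIGMA V:maximal_repeats T. right_ext T V) \<subseteq> (\<lambda>(v, w). (v, w ! length v)) ` ?G"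
  proof clarify
    fix V b assume V: "V \<in> maximal_repeats T" and b: "b \<in> right_ext T V"
    then obtain w where "(V, w) \<in> st_edges T" "prefix (V @ [b]) w"
      using st_edge_right_ext by (auto simp: maximal_repeats_def)
    with V show "(V, b) \<in> (\<lambda>(v, w). (v, w ! length v)) ` ?G"
      by (force simp: prefix_def nth_append)
  qed
  moreover have "finite ?G" by (rule finite_subset[OF _ finite_st_edges]) auto
  ultimately show ?thesis
    unfolding card_E_r_F_r by (meson card_image_le card_mono finite_imageI le_trans)
qed

end

locale lz77 = terminated_string +
  fixes A :: "nat list"
  assumes set_A: "set A = set T"
begin

definition has_source :: "nat \<Rightarrow> nat \<Rightarrow> bool" where
  "has_source k l \<longleftrightarrow> l \<le> length T - k \<and> (\<exists>p. p < length A + k \<and> p + l \<le> length (A @ T) \<and>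
     take l (drop p (A @ T)) = take l (drop k T))"

lemma lz_len_eq_Greatest: "lz_len A T k = Greatest (has_source k)"
  by (simp add: lz_len_def has_source_def[abs_def])

lemma has_source_le: "has_source k l \<Longrightarrow> l \<le> n - k"
  using length_T by (simp add: has_source_def)

lemma lz_len_ge:
  assumes "q < k" "k + m \<le> n" "take m (drop q T) = take m (drop k T)"
  shows "m \<le> lz_len A T k"
proof -
  have "has_source k m"
    unfolding has_source_def using assms length_T by (intro conjI exI[of _ "length A + q"]) auto
  then show ?thesis unfolding lz_len_eq_Greatest by (rule Greatest_le_nat[OF _ has_source_le])
qed

lemma lz_len_bounds:
  assumes "k < n" shows "0 < lz_len A T k" "k + lz_len A T k \<le> n"
proof -
  have "T ! k \<in> set A" using set_A assms length_T by simp
  then obtain p where p: "p < length A" "A ! p = T ! k" by (auto simp: in_set_conv_nth)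
  have "has_source k 1"
    unfolding has_source_def using p assms length_T
    by (intro conjI exI[of _ p]) (auto simp: take_Suc_conv_app_nth nth_append)
  then have "has_source k (lz_len A T k)" "1 \<le> lz_len A T k"
    unfolding lz_len_eq_Greatest
    using GreatestI_nat[OF _ has_source_le] Greatest_le_nat[OF _ has_source_le] by blast+
  then show "0 < lz_len A T k" "k + lz_len A T k \<le> n" using has_source_le assms by fastforce+
qed

lemma lz_starts_less: "k \<in> lz_starts A T \<Longrightarrow> k < n"
  by (induction rule: lz_starts.induct) (use two_le_n length_T in auto)

lemma lz_starts_gap:
  "k1 \<in> lz_starts A T \<Longrightarrow> k0 \<in> lz_starts A T \<Longrightarrow> k0 < k1 \<Longrightarrow> k0 + lz_len A T k0 \<le> k1"
proof (induction k1 arbitrary: k0 rule: less_induct)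
  case (less k1)
  from less.prems(1) show ?case
  proof cases
    case start
    then show ?thesis using less.prems by simp
  next
    case (step k)
    have k1: "k1 = k + lz_len A T k" using step by simp
    then have "k < k1" using lz_len_bounds(1)[OF lz_starts_less[OF step(2)]] by simp
    consider "k0 = k" | "k0 < k" | "k < k0" by linarith
    then show ?thesis
    proof cases
      case 2
      then show ?thesis using less.IH[OF \<open>k < k1\<close> step(2) less.prems(2)] k1 by simp
    next
      case 3
      then show ?thesis using less.IH[OF less.prems(3) less.prems(2) step(2)] k1 less.prems(3) by simp
    qed (use k1 in simp)
  qed
qed

lemma earlier_match_right_maximal:
  assumes "s < k" "k < n" "k + m \<le> n" "take m (drop s T) = take m (drop k T)"
  obtains M where "m \<le> M" "M \<le> lz_len A T k" "right_maximal T (take M (drop k T))"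
proof -
  define P where "P M \<longleftrightarrow> k + M \<le> n \<and> take M (drop s T) = take M (drop k T)" for M
  have bound: "P M \<Longrightarrow> M \<le> n" for M by (simp add: P_def)
  define M where "M = Greatest P"
  have Pm: "P m" using assms by (simp add: P_def)
  have PM: "P M" unfolding M_def by (rule GreatestI_nat[where P = P, OF Pm bound])
  have "m \<le> M" unfolding M_def by (rule Greatest_le_nat[where P = P, OF Pm bound])
  have "k + M < n"
  proof (rule ccontr)
    assume "\<not> k + M < n"
    then have "k + M = n" using PM by (simp add: P_def)
    then have "M - 1 < M" using assms(2) by simp
    then have "take M (drop s T) ! (M - 1) = take M (drop k T) ! (M - 1)"
      using PM by (simp add: P_def)
    then have "T ! (s + (M - 1)) = T ! (k + (M - 1))"
      using \<open>k + M = n\<close> \<open>M - 1 < M\<close> assms(1) length_T by simp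
    moreover have "k + (M - 1) = n - 1" "s + (M - 1) < n - 1"
      using assms(1,2) \<open>k + M = n\<close> by auto
    ultimately show False using last_T T_nonzero by metis
  qed
  have mismatch: "T ! (s + M) \<noteq> T ! (k + M)"
  proof
    assume "T ! (s + M) = T ! (k + M)"
    then have "P (Suc M)"
      using PM \<open>k + M < n\<close> assms(1) length_T by (simp add: P_def take_Suc_conv_app_nth)
    then show False using Greatest_le_nat[where P = P, OF _ bound] by (fastforce simp: M_def)
  qed
  let ?u = "take M (drop k T)"
  have "length ?u = M" using \<open>k + M < n\<close> length_T by simp
  then have "s \<in> occ T ?u" "k \<in> occ T ?u"
    using PM \<open>k + M < n\<close> assms(1) occ_linear_iff by (auto simp: P_def)
  then have "right_maximal T ?u"
    using right_maximalI[of s ?u k] mismatch assms(1) \<open>k + M < n\<close> \<open>length ?u = M\<close> by simp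
  moreover have "M \<le> lz_len A T k"
    using lz_len_ge[OF assms(1)] PM by (simp add: P_def)
  ultimately show ?thesis using that \<open>m \<le> M\<close> by blast
qed

text \<open>The label (x @ y, b) of the factor starting at k, as in the proof idea above. An empty y
  gets the empty context; the injectivity argument relies on this.\<close>

definition factor_rm_len :: "nat \<Rightarrow> nat" where
  "factor_rm_len k = (GREATEST m. m \<le> lz_len A T k \<and> right_maximal T (take m (drop k T)))"

definition factor_rm_prefix :: "nat \<Rightarrow> nat list" where
  "factor_rm_prefix k = take (factor_rm_len k) (drop k T)"

definition factor_context :: "nat \<Rightarrow> nat list" where
  "factor_context k = (SOME x. x @ factor_rm_prefix k \<in> maximal_repeats T
     \<and> always_preceded x (factor_rm_prefix k) \<and> (factor_rm_prefix k = [] \<longrightarrow> x = []))"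

definition factor_label :: "nat \<Rightarrow> nat list \<times> nat" where
  "factor_label k = (factor_context k @ factor_rm_prefix k, T ! (k + factor_rm_len k))"

lemma factor_rm_len:
  shows factor_rm_len_le: "factor_rm_len k \<le> lz_len A T k"
    and right_maximal_factor_rm_prefix: "right_maximal T (factor_rm_prefix k)"
    and factor_rm_len_greatest:
      "M \<le> lz_len A T k \<Longrightarrow> right_maximal T (take M (drop k T)) \<Longrightarrow> M \<le> factor_rm_len k"
proof -
  let ?P = "\<lambda>m. m \<le> lz_len A T k \<and> right_maximal T (take m (drop k T))"
  have "?P 0" using maximal_repeat_Nil by (simp add: maximal_repeats_def)
  then have "?P (factor_rm_len k)"
    unfolding factor_rm_len_def by (rule GreatestI_nat) auto
  then show "factor_rm_len k \<le> lz_len A T k" "right_maximal T (factor_rm_prefix k)"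
    by (simp_all add: factor_rm_prefix_def)
  show "M \<le> lz_len A T k \<Longrightarrow> right_maximal T (take M (drop k T)) \<Longrightarrow> M \<le> factor_rm_len k"
    unfolding factor_rm_len_def by (rule Greatest_le_nat[where b = "lz_len A T k"]) auto
qed

lemma length_factor_rm_prefix:
  assumes "k < n" shows "length (factor_rm_prefix k) = factor_rm_len k"
  using factor_rm_len_le[of k] lz_len_bounds(2)[OF assms] length_T
  by (simp add: factor_rm_prefix_def)

lemma factor_rm_prefix_occ:
  assumes "k < n"
  shows "k + factor_rm_len k < n" "k \<in> occ T (factor_rm_prefix k @ [T ! (k + factor_rm_len k)])"
proof -
  let ?y = "factor_rm_prefix k"
  have le: "k + factor_rm_len k \<le> n"
    using factor_rm_len_le[of k] lz_len_bounds(2)[OF assms] by simp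
  have len: "length ?y = factor_rm_len k" using length_factor_rm_prefix[OF assms] .
  then have "k \<in> occ T ?y" using occ_linear_iff assms le by (simp add: factor_rm_prefix_def)
  then show less: "k + factor_rm_len k < n"
    using occ_terminator_free_bound repeat_terminator_free right_maximal_factor_rm_prefix len
    by (fastforce simp: right_maximal_def)
  have "take (Suc (factor_rm_len k)) (drop k T) = ?y @ [T ! (k + factor_rm_len k)]"
    using less length_T by (simp add: factor_rm_prefix_def take_Suc_conv_app_nth)
  then show "k \<in> occ T (?y @ [T ! (k + factor_rm_len k)])"
    using occ_linear_iff[of k] assms less len by simp
qed

lemma factor_context:
  shows "factor_context k @ factor_rm_prefix k \<in> maximal_repeats T"
    and "always_preceded (factor_context k) (factor_rm_prefix k)"
    and "factor_rm_prefix k = [] \<Longrightarrow> factor_context k = []"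
proof -
  obtain x where "x @ factor_rm_prefix k \<in> maximal_repeats T"
    "always_preceded x (factor_rm_prefix k)" "factor_rm_prefix k = [] \<Longrightarrow> x = []"
    using maximal_repeat_left_closure[OF right_maximal_factor_rm_prefix[of k]] by blast
  then have "\<exists>x. x @ factor_rm_prefix k \<in> maximal_repeats T
     \<and> always_preceded x (factor_rm_prefix k) \<and> (factor_rm_prefix k = [] \<longrightarrow> x = [])" by blast
  from someI_ex[OF this] show "factor_context k @ factor_rm_prefix k \<in> maximal_repeats T"
    and "always_preceded (factor_context k) (factor_rm_prefix k)"
    and "factor_rm_prefix k = [] \<Longrightarrow> factor_context k = []"
    unfolding factor_context_def by blast+
qed

lemma factor_label_occ:
  assumes "k < n" "factor_label k = (V, b)"
  obtains i where "i \<in> occ T (V @ [b])" "(i + length (factor_context k)) mod n = k"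
proof -
  have V: "V = factor_context k @ factor_rm_prefix k" and b: "b = T ! (k + factor_rm_len k)"
    using assms(2) by (simp_all add: factor_label_def)
  obtain i where "i \<in> occ T (factor_context k @ factor_rm_prefix k @ [b])"
    "(i + length (factor_context k)) mod n = k"
    using factor_rm_prefix_occ(2)[OF assms(1)] unfolding b[symmetric]
    by (rule always_preceded_occ_append[OF factor_context(2)])
  then show ?thesis using that V by simp
qed

lemma factor_label_mem:
  assumes "k < n" shows "factor_label k \<in> (SIGMA V:maximal_repeats T. right_ext T V)"
proof -
  obtain V b where Vb: "factor_label k = (V, b)" by fastforce
  obtain i where "i \<in> occ T (V @ [b])" by (rule factor_label_occ[OF assms Vb])
  then have "b \<in> right_ext T V" by (auto simp: right_ext_def)
  moreover have "V = factor_context k @ factor_rm_prefix k"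
    using Vb by (simp add: factor_label_def)
  then have "V \<in> maximal_repeats T" using factor_context(1) by simp
  ultimately show ?thesis using Vb by simp
qed

lemma extended_rm_prefix_no_earlier_occ:
  assumes "k < n" "s < k" "s \<in> occ T (factor_rm_prefix k @ [T ! (k + factor_rm_len k)])"
  shows False
proof -
  let ?m = "factor_rm_len k" and ?w = "factor_rm_prefix k @ [T ! (k + factor_rm_len k)]"
  have len: "length ?w = Suc ?m" using length_factor_rm_prefix[OF assms(1)] by simp
  have "k + ?m < n" using factor_rm_prefix_occ(1)[OF assms(1)] .
  then have "take (Suc ?m) (drop s T) = ?w" "take (Suc ?m) (drop k T) = ?w"
    using occ_linear_iff[of s ?w] occ_linear_iff[of k ?w] assms factor_rm_prefix_occ(2) len by auto
  then have match: "take (Suc ?m) (drop s T) = take (Suc ?m) (drop k T)" by simp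
  have "k + Suc ?m \<le> n" using \<open>k + ?m < n\<close> by simp
  then obtain M where "Suc ?m \<le> M" "M \<le> lz_len A T k" "right_maximal T (take M (drop k T))"
    by (rule earlier_match_right_maximal[OF assms(2,1) _ match])
  then show False using factor_rm_len_greatest by fastforce
qed

lemma factor_label_shared_occ:
  assumes "k0 < n" "k1 < n" "factor_label k0 = (V, b)" "factor_label k1 = (V, b)"
  obtains s where "s \<in> occ T (factor_rm_prefix k1 @ [b])"
    "s + factor_rm_len k1 = k0 + factor_rm_len k0"
proof -
  let ?x0 = "factor_context k0" and ?y0 = "factor_rm_prefix k0" and ?m0 = "factor_rm_len k0"
  let ?x1 = "factor_context k1" and ?y1 = "factor_rm_prefix k1" and ?m1 = "factor_rm_len k1"
  have V: "V = ?x0 @ ?y0" "V = ?x1 @ ?y1"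
    using assms(3,4) by (simp_all add: factor_label_def)
  have len: "length ?y0 = ?m0" "length ?y1 = ?m1"
    using length_factor_rm_prefix assms(1,2) by auto
  obtain i where i: "i \<in> occ T (V @ [b])" and i_k0: "(i + length ?x0) mod n = k0"
    by (rule factor_label_occ[OF assms(1,3)])
  define s where "s = (i + length ?x1) mod n"
  have s: "s \<in> occ T (?y1 @ [b])"
    using occ_appendD2[of i ?x1 "?y1 @ [b]"] i V(2) by (simp add: s_def)
  have "s + ?m1 < n"
    using occ_terminator_free_bound[OF _ occ_appendD1[OF s]] repeat_terminator_free
      right_maximal_factor_rm_prefix len(2) by (simp add: right_maximal_def)
  have "(s + ?m1) mod n = (i + length V) mod n"
    using V(2) len(2) by (simp add: s_def mod_add_left_eq add.assoc)
  also have "\<dots> = (k0 + ?m0) mod n"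
    using V(1) len(1) i_k0 by (metis add.assoc length_append mod_add_left_eq)
  finally have "s + ?m1 = k0 + ?m0"
    using \<open>s + ?m1 < n\<close> factor_rm_prefix_occ(1)[OF assms(1)] by simp
  with s show ?thesis by (rule that)
qed

lemma factor_labels_distinct:
  assumes k0: "k0 \<in> lz_starts A T" and k1: "k1 \<in> lz_starts A T" and "k0 < k1"
  shows "factor_label k0 \<noteq> factor_label k1"
proof
  assume eq: "factor_label k0 = factor_label k1"
  have "k0 < n" "k1 < n" using k0 k1 lz_starts_less by auto
  obtain V b where Vb0: "factor_label k0 = (V, b)" by fastforce
  with eq have Vb1: "factor_label k1 = (V, b)" by simp
  obtain s where s: "s \<in> occ T (factor_rm_prefix k1 @ [b])"
    and s_end: "s + factor_rm_len k1 = k0 + factor_rm_len k0"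
    by (rule factor_label_shared_occ[OF \<open>k0 < n\<close> \<open>k1 < n\<close> Vb0 Vb1])
  show False
  proof (cases "s < k1")
    case True
    moreover have "b = T ! (k1 + factor_rm_len k1)" using Vb1 by (simp add: factor_label_def)
    ultimately show False using extended_rm_prefix_no_earlier_occ[OF \<open>k1 < n\<close>] s by blast
  next
    case False
    have "k0 + factor_rm_len k0 \<le> k1"
      using lz_starts_gap[OF k1 k0 \<open>k0 < k1\<close>] factor_rm_len_le[of k0] by simp
    then have "factor_rm_len k1 = 0" using s_end False by linarith
    then have "factor_rm_prefix k1 = []" using length_factor_rm_prefix[OF \<open>k1 < n\<close>] by simp
    then have "V = []" using Vb1 factor_context(3) by (simp add: factor_label_def)
    then have "factor_rm_len k0 = 0"
      using Vb0 length_factor_rm_prefix[OF \<open>k0 < n\<close>] by (simp add: factor_label_def)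
    then show False using s_end False \<open>k0 < k1\<close> by simp
  qed
qed

lemma inj_on_factor_label: "inj_on factor_label (lz_starts A T)"
proof (rule inj_onI)
  fix k0 k1 assume "k0 \<in> lz_starts A T" "k1 \<in> lz_starts A T" "factor_label k0 = factor_label k1"
  then show "k0 = k1" using factor_labels_distinct by (metis linorder_neqE_nat)
qed

lemma card_lz_starts_le: "card (lz_starts A T) \<le> card (E_r T) + card (F_r T)"
proof -
  have "factor_label ` lz_starts A T \<subseteq> (SIGMA V:maximal_repeats T. right_ext T V)"
    using factor_label_mem lz_starts_less by blast
  then have "card (lz_starts A T) \<le> card (SIGMA V:maximal_repeats T. right_ext T V)"
    using card_inj_on_le[OF inj_on_factor_label _ finite_maximal_repeat_extensions] by blast
  also have "\<dots> \<le> card (E_r T) + card (F_r T)" by (rule card_maximal_repeat_extensions_le)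
  finally show ?thesis .
qed

end

theorem theorem2:
  fixes \<sigma> n :: nat and T A :: "nat list"
  assumes "\<sigma> \<ge> 1" and "n \<ge> 2" and "length T = n"
    and "\<forall>i < n - 1. T ! i \<in> {1..\<sigma>}" and "T ! (n - 1) = 0"
    and "distinct A" and "set A = set T"
  shows "lz_z A T \<le> card (E_r T) + card (F_r T)"
proof -
  interpret lz77 T n A
    by unfold_locales (use assms in fastforce)+
  show ?thesis unfolding lz_z_def by (rule card_lz_starts_le)
qed

end
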